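(* Let $f(t)=\sum_{n=1}^N A_n(t)e^{2\pi i n\xi_0 t}\in\mathcal{T}$ and suppose there are constants $C_n>0$ ($n=1,\dots,N$) and $s>1$ with $|A_n'(t)|\le C_n(1+|t|^s)^{-1}$ for all $t\in\mathbb{R}$. Let $\tau:\mathbb{R}\to\mathbb{R}$ be measurable with $\|\tau\|_\infty<1$, and define $\mathfrak{F}_{A_\tau}(f)(t)=\sum_{n=1}^N A_n(t+\tau(t))e^{2\pi i n\xi_0 t}$. Then $$\|f-\mathfrak{F}_{A_\tau}(f)\|_2\le D\,\|\tau\|_\infty\sum_{n=1}^N C_n,$$ where $D>0$ is given by $D^2=2+\frac{1}{1-\|\tau\|_\infty}\big\|(1+|x|^s)^{-1}\big\|_{L^2(\mathbb{R})}^2$ (so $D$ depends only on $\|\tau\|_\infty$ and $s$).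
   Context: $\mathcal{T}=\{\sum_{n=1}^N A_n(t)e^{2\pi i n\xi_0 t} : A_n\in\mathcal{C}_c^\infty(\mathbb{R}),\ A_n\ge0,\ \|A_n\|_\infty\le 1/n\}$, with fixed fundamental frequency $\xi_0>0$ and $N\in\mathbb{N}$. *)

theory Defs
  imports "HOL-Analysis.Analysis"
begin

definition smooth_real :: "(real \<Rightarrow> real) \<Rightarrow> bool" where
  "smooth_real f \<longleftrightarrow>
     (\<forall>k t. ((deriv ^^ k) f has_real_derivative (deriv ^^ Suc k) f t) (at t))"

definition Cc_inf :: "(real \<Rightarrow> real) \<Rightarrow> bool" where
  "Cc_inf f \<longleftrightarrow> smooth_real f \<and> compact (closure {t. f t \<noteq> 0})"

definition Linf_norm :: "(real \<Rightarrow> real) \<Rightarrow> real" where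
  "Linf_norm g = Inf {c. 0 \<le> c \<and> (AE x in lborel. \<bar>g x\<bar> \<le> c)}"

definition L2_norm_R :: "(real \<Rightarrow> 'a::real_normed_vector) \<Rightarrow> real" where
  "L2_norm_R g = sqrt (integral\<^sup>L lborel (\<lambda>x. (norm (g x))\<^sup>2))"

end

theory Submission
  imports Defs "HOL-Probability.Sinc_Integral"
begin

text \<open>Write \<open>\<delta> = \<parallel>\<tau>\<parallel>\<^sub>\<infinity>\<close> and \<open>w(x) = (1 + \<bar>x\<bar>\<^sup>s)\<^sup>-\<^sup>1\<close>. By the mean value theorem,
  \<open>\<bar>A\<^sub>n(t) - A\<^sub>n(t + \<tau>(t))\<bar> \<le> C\<^sub>n \<delta> sup {w u | \<bar>u - t\<bar> \<le> \<delta>}\<close>, and this supremum is at most \<open>1\<close>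
  for \<open>\<bar>t\<bar> < 1\<close> and at most \<open>w((1 - \<delta>) t)\<close> otherwise, because then \<open>\<bar>u\<bar> \<ge> (1 - \<delta>)\<bar>t\<bar>\<close>.
  The exponentials are unimodular, so \<open>\<bar>f - \<F>\<^sub>A\<^sub>\<tau>(f)\<bar>\<close> is bounded pointwise by \<open>\<delta> \<Sum> C\<^sub>n\<close> times
  this envelope, whose square integrates to at most \<open>2 + \<parallel>w\<parallel>\<^sub>2\<^sup>2 / (1 - \<delta>)\<close> by rescaling.\<close>

lemma Linf_norm_nonneg:
  assumes "\<exists>c. AE x in lborel. \<bar>g x\<bar> \<le> c"
  shows "0 \<le> Linf_norm g"
proof -
  obtain c where "AE x in lborel. \<bar>g x\<bar> \<le> c" using assms by blast
  then have "max c 0 \<in> {c. 0 \<le> c \<and> (AE x in lborel. \<bar>g x\<bar> \<le> c)}"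
    by (auto elim!: eventually_mono)
  then have "{c. 0 \<le> c \<and> (AE x in lborel. \<bar>g x\<bar> \<le> c)} \<noteq> {}" by blast
  then show ?thesis unfolding Linf_norm_def by (intro cInf_greatest) auto
qed

lemma AE_abs_le_Linf_norm:
  assumes "\<exists>c. AE x in lborel. \<bar>g x\<bar> \<le> c"
  shows "AE x in lborel. \<bar>g x\<bar> \<le> Linf_norm g"
proof -
  define S where "S = {c. 0 \<le> c \<and> (AE x in lborel. \<bar>g x\<bar> \<le> c)}"
  obtain c where c: "AE x in lborel. \<bar>g x\<bar> \<le> c" using assms by blast
  have "max c 0 \<in> S" unfolding S_def using c by (auto elim!: eventually_mono)
  hence ne: "S \<noteq> {}" by blast
  have "AE x in lborel. \<bar>g x\<bar> \<le> Linf_norm g + 1 / (real n + 1)" for n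
  proof -
    have "Inf S < Linf_norm g + 1 / (real n + 1)" unfolding Linf_norm_def S_def
      by (simp add: add_pos_pos)
    then obtain c where "c \<in> S" "c < Linf_norm g + 1 / (real n + 1)"
      using cInf_lessD[OF ne] by blast
    then show ?thesis unfolding S_def by (auto elim!: eventually_mono)
  qed
  hence "AE x in lborel. \<forall>n. \<bar>g x\<bar> \<le> Linf_norm g + 1 / (real n + 1)"
    by (simp add: AE_all_countable)
  then show ?thesis
  proof (rule eventually_mono)
    fix x assume H: "\<forall>n. \<bar>g x\<bar> \<le> Linf_norm g + 1 / (real n + 1)"
    show "\<bar>g x\<bar> \<le> Linf_norm g"
    proof (rule field_le_epsilon)
      fix e :: real assume "e > 0"
      then obtain n where "1 / (real n + 1) < e"
        by (metis add.commute nat_approx_posE of_nat_Suc)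
      then show "\<bar>g x\<bar> \<le> Linf_norm g + e" using H[rule_format, of n] by linarith
    qed
  qed
qed

lemma inverse_one_plus_powr_squared_le:
  fixes x s :: real
  assumes "s \<ge> 1"
  shows "(1 / (1 + \<bar>x\<bar> powr s))\<^sup>2 \<le> 2 * inverse (1 + x\<^sup>2)"
proof -
  have one_le: "1 \<le> (1 + \<bar>x\<bar> powr s)\<^sup>2" by (simp add: one_le_power)
  have "x\<^sup>2 \<le> (1 + \<bar>x\<bar> powr s)\<^sup>2"
  proof (cases "\<bar>x\<bar> \<le> 1")
    case True
    then have "x\<^sup>2 \<le> 1" by (simp add: abs_square_le_1)
    with one_le show ?thesis by linarith
  next
    case False
    then have "\<bar>x\<bar> \<le> 1 + \<bar>x\<bar> powr s" using assms powr_mono[of 1 s "\<bar>x\<bar>"] by simp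
    then show ?thesis using power_mono[of "\<bar>x\<bar>" _ 2] by simp
  qed
  with one_le have "1 + x\<^sup>2 \<le> 2 * (1 + \<bar>x\<bar> powr s)\<^sup>2" by linarith
  moreover have "1 + \<bar>x\<bar> powr s > 0" "(1::real) + x\<^sup>2 > 0"
    by (simp_all add: add_pos_nonneg)
  ultimately show ?thesis by (simp add: power_divide divide_simps)
qed

lemma integrable_inverse_one_plus_powr_squared:
  fixes s :: real
  assumes "s > 1"
  shows "integrable lborel (\<lambda>x::real. (1 / (1 + \<bar>x\<bar> powr s))\<^sup>2)"
proof (rule Bochner_Integration.integrable_bound)
  show "integrable lborel (\<lambda>x::real. 2 * inverse (1 + x\<^sup>2))"
    using integrable_inverse_1_plus_square by (simp add: set_integrable_def)
  show "AE x in lborel. norm ((1 / (1 + \<bar>x\<bar> powr s))\<^sup>2) \<le> norm (2 * inverse (1 + x\<^sup>2))"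
    using inverse_one_plus_powr_squared_le[of s] assms
    by (intro AE_I2) (simp add: add_pos_nonneg less_imp_le)
qed measurable

definition decay_envelope :: "real \<Rightarrow> real \<Rightarrow> real \<Rightarrow> real" where
  "decay_envelope s \<delta> t = (if \<bar>t\<bar> < 1 then 1 else 1 / (1 + \<bar>(1 - \<delta>) * t\<bar> powr s))"

lemma decay_envelope_nonneg: "0 \<le> decay_envelope s \<delta> t"
  unfolding decay_envelope_def by (simp add: add_pos_nonneg)

lemma inverse_one_plus_powr_le_decay_envelope:
  fixes s \<delta> t u :: real
  assumes "\<bar>u - t\<bar> \<le> \<delta>" "\<delta> < 1" "s > 0"
  shows "1 / (1 + \<bar>u\<bar> powr s) \<le> decay_envelope s \<delta> t"
proof (cases "\<bar>t\<bar> < 1")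
  case True
  then show ?thesis unfolding decay_envelope_def by (simp add: add_pos_nonneg)
next
  case False
  have "\<delta> \<le> \<delta> * \<bar>t\<bar>" using False assms(1)
    by (metis abs_ge_zero mult.right_neutral mult_left_mono not_less order_trans)
  moreover have "\<bar>(1 - \<delta>) * t\<bar> = (1 - \<delta>) * \<bar>t\<bar>" using assms(2) by (simp add: abs_mult)
  ultimately have "\<bar>(1 - \<delta>) * t\<bar> \<le> \<bar>u\<bar>" using assms(1) by (simp add: algebra_simps)
  hence "\<bar>(1 - \<delta>) * t\<bar> powr s \<le> \<bar>u\<bar> powr s" using assms(3) by (simp add: powr_mono2)
  then show ?thesis unfolding decay_envelope_def using False by (simp add: frac_le add_pos_nonneg)
qed

lemma abs_diff_shift_le_decay_envelope:
  fixes A A' :: "real \<Rightarrow> real" and C d \<delta> s t :: real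
  assumes der: "\<And>u. (A has_real_derivative A' u) (at u)"
    and bound: "\<And>u. \<bar>A' u\<bar> \<le> C / (1 + \<bar>u\<bar> powr s)"
    and "\<bar>d\<bar> \<le> \<delta>" "\<delta> < 1" "s > 0"
  shows "\<bar>A t - A (t + d)\<bar> \<le> C * \<delta> * decay_envelope s \<delta> t"
proof -
  have C_nonneg: "C \<ge> 0" using bound[of 0] by simp
  have "\<bar>A' u\<bar> \<le> C * decay_envelope s \<delta> t" if "u \<in> cball t \<bar>d\<bar>" for u
  proof -
    have "\<bar>u - t\<bar> \<le> \<delta>" using that assms(3) by (auto simp: dist_real_def)
    then have "C / (1 + \<bar>u\<bar> powr s) \<le> C * decay_envelope s \<delta> t"
      using inverse_one_plus_powr_le_decay_envelope[OF _ assms(4,5)] C_nonneg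
      by (metis mult_left_mono times_divide_eq_right mult_1_right)
    then show ?thesis using bound[of u] by linarith
  qed
  then have "norm (A t - A (t + d)) \<le> C * decay_envelope s \<delta> t * norm (t - (t + d))"
    by (intro field_differentiable_bound[where S="cball t \<bar>d\<bar>" and f'=A'])
       (auto intro: has_field_derivative_at_within der simp: dist_real_def)
  also have "\<dots> \<le> C * decay_envelope s \<delta> t * \<delta>"
    using assms(3) C_nonneg decay_envelope_nonneg by (intro mult_left_mono) auto
  finally show ?thesis by (simp add: mult_ac)
qed

definition envelope_majorant :: "real \<Rightarrow> real \<Rightarrow> real \<Rightarrow> real" where
  "envelope_majorant s \<delta> t = indicator {-1<..<1} t + (1 / (1 + \<bar>(1 - \<delta>) * t\<bar> powr s))\<^sup>2"

lemma decay_envelope_squared_le: "(decay_envelope s \<delta> t)\<^sup>2 \<le> envelope_majorant s \<delta> t"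
  unfolding decay_envelope_def envelope_majorant_def by (auto simp: indicator_def)

lemma
  fixes s \<delta> :: real
  assumes "s > 1" "\<delta> < 1"
  shows integrable_envelope_majorant: "integrable lborel (envelope_majorant s \<delta>)"
    and integral_envelope_majorant: "integral\<^sup>L lborel (envelope_majorant s \<delta>)
          = 2 + (L2_norm_R (\<lambda>x::real. 1 / (1 + \<bar>x\<bar> powr s)))\<^sup>2 / (1 - \<delta>)"
proof -
  define w where "w = (\<lambda>x::real. 1 / (1 + \<bar>x\<bar> powr s))"
  have w_int: "integrable lborel (\<lambda>x. (w x)\<^sup>2)"
    unfolding w_def using integrable_inverse_one_plus_powr_squared[OF assms(1)] .
  have "integrable lborel (\<lambda>t. (w (0 + (1 - \<delta>) * t))\<^sup>2)"
    using lborel_integrable_real_affine[OF w_int, of "1 - \<delta>" 0] assms(2) by simp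
  moreover have "integral\<^sup>L lborel (\<lambda>x. (w x)\<^sup>2)
                   = (1 - \<delta>) * integral\<^sup>L lborel (\<lambda>t. (w (0 + (1 - \<delta>) * t))\<^sup>2)"
    using lborel_integral_real_affine[of "1 - \<delta>" "\<lambda>x. (w x)\<^sup>2" 0] assms(2) by simp
  moreover have "integrable lborel (indicator {-1<..<1::real} :: real \<Rightarrow> real)"
    by (intro integrable_real_indicator) auto
  moreover have "envelope_majorant s \<delta> = (\<lambda>t. indicator {-1<..<1} t + (w ((1 - \<delta>) * t))\<^sup>2)"
    unfolding envelope_majorant_def w_def by simp
  ultimately show "integrable lborel (envelope_majorant s \<delta>)"
    "integral\<^sup>L lborel (envelope_majorant s \<delta>) = 2 + (L2_norm_R w)\<^sup>2 / (1 - \<delta>)"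
    unfolding L2_norm_R_def using assms(2) by simp_all
qed

lemma smooth_real_has_real_derivative:
  "smooth_real f \<Longrightarrow> (f has_real_derivative deriv f t) (at t)"
  unfolding smooth_real_def by (metis funpow_0 funpow_Suc_right o_apply)

lemma norm_exp_2pi_i_frequency:
  "norm (exp (2 * complex_of_real pi * \<i> * of_nat n * complex_of_real \<xi> * complex_of_real t)) = 1"
proof -
  have "2 * complex_of_real pi * \<i> * of_nat n * complex_of_real \<xi> * complex_of_real t
        = \<i> * complex_of_real (2 * pi * real n * \<xi> * t)" by (simp add: mult_ac)
  then show ?thesis by (simp only: norm_exp_i_times)
qed

lemma norm_unimodular_sum_diff_le:
  fixes a b :: "nat \<Rightarrow> real" and e :: "nat \<Rightarrow> complex"
  assumes "\<And>n. n \<in> S \<Longrightarrow> norm (e n) = 1"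
  shows "norm ((\<Sum>n\<in>S. complex_of_real (a n) * e n) - (\<Sum>n\<in>S. complex_of_real (b n) * e n))
           \<le> (\<Sum>n\<in>S. \<bar>a n - b n\<bar>)"
proof -
  have "norm ((\<Sum>n\<in>S. complex_of_real (a n) * e n) - (\<Sum>n\<in>S. complex_of_real (b n) * e n))
        = norm (\<Sum>n\<in>S. complex_of_real (a n - b n) * e n)"
    by (simp add: sum_subtractf[symmetric] algebra_simps)
  also have "\<dots> \<le> (\<Sum>n\<in>S. norm (complex_of_real (a n - b n) * e n))"
    by (rule norm_sum)
  also have "\<dots> = (\<Sum>n\<in>S. \<bar>a n - b n\<bar>)"
    using assms by (simp add: norm_mult flip: of_real_diff)
  finally show ?thesis .
qed

lemma norm_modulated_shift_difference_le:
  fixes A A' :: "nat \<Rightarrow> real \<Rightarrow> real" and e :: "nat \<Rightarrow> complex"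
  assumes "\<And>n. n \<in> S \<Longrightarrow> norm (e n) = 1"
    and "\<And>n u. n \<in> S \<Longrightarrow> (A n has_real_derivative A' n u) (at u)"
    and "\<And>n u. n \<in> S \<Longrightarrow> \<bar>A' n u\<bar> \<le> C n / (1 + \<bar>u\<bar> powr s)"
    and "\<bar>d\<bar> \<le> \<delta>" "\<delta> < 1" "s > 0"
  shows "norm ((\<Sum>n\<in>S. complex_of_real (A n t) * e n) - (\<Sum>n\<in>S. complex_of_real (A n (t + d)) * e n))
           \<le> \<delta> * (\<Sum>n\<in>S. C n) * decay_envelope s \<delta> t"
proof -
  have "norm ((\<Sum>n\<in>S. complex_of_real (A n t) * e n) - (\<Sum>n\<in>S. complex_of_real (A n (t + d)) * e n))
        \<le> (\<Sum>n\<in>S. \<bar>A n t - A n (t + d)\<bar>)"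
    using assms(1) by (rule norm_unimodular_sum_diff_le)
  also have "\<dots> \<le> (\<Sum>n\<in>S. C n * \<delta> * decay_envelope s \<delta> t)"
    using assms(2-6) by (intro sum_mono abs_diff_shift_le_decay_envelope)
  also have "\<dots> = \<delta> * (\<Sum>n\<in>S. C n) * decay_envelope s \<delta> t"
    unfolding sum_distrib_right sum_distrib_left by (simp add: mult_ac)
  finally show ?thesis .
qed

lemma borel_measurable_modulated_sum:
  fixes A :: "nat \<Rightarrow> real \<Rightarrow> real" and c :: "nat \<Rightarrow> complex"
  assumes "\<And>n. n \<in> S \<Longrightarrow> continuous_on UNIV (A n)" "\<sigma> \<in> borel_measurable lborel"
  shows "(\<lambda>t. \<Sum>n\<in>S. complex_of_real (A n (\<sigma> t)) * exp (c n * complex_of_real t))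
           \<in> borel_measurable lborel"
proof (intro borel_measurable_sum borel_measurable_times)
  fix n assume "n \<in> S"
  then have "A n \<in> borel_measurable borel"
    using assms(1) borel_measurable_continuous_onI by blast
  with assms(2) show "(\<lambda>t. complex_of_real (A n (\<sigma> t))) \<in> borel_measurable lborel"
    by measurable
qed measurable

lemma L2_norm_R_le_of_AE_bound:
  fixes g :: "real \<Rightarrow> 'a::{banach, second_countable_topology}"
  assumes "g \<in> borel_measurable lborel" "integrable lborel h" "c \<ge> 0"
    and "\<And>t. 0 \<le> v t" "\<And>t. (v t)\<^sup>2 \<le> h t"
    and "AE t in lborel. norm (g t) \<le> c * v t"
  shows "L2_norm_R g \<le> c * sqrt (integral\<^sup>L lborel h)"
proof -
  have bound: "AE t in lborel. (norm (g t))\<^sup>2 \<le> c\<^sup>2 * h t"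
    using assms(6)
  proof (rule eventually_mono)
    fix t assume "norm (g t) \<le> c * v t"
    then have "(norm (g t))\<^sup>2 \<le> c\<^sup>2 * (v t)\<^sup>2"
      using power_mono[of "norm (g t)" "c * v t" 2] by (simp add: power_mult_distrib)
    also have "\<dots> \<le> c\<^sup>2 * h t" using assms(5) by (intro mult_left_mono) auto
    finally show "(norm (g t))\<^sup>2 \<le> c\<^sup>2 * h t" .
  qed
  have dom: "integrable lborel (\<lambda>t. c\<^sup>2 * h t)" using assms(2) by simp
  have "integrable lborel (\<lambda>t. (norm (g t))\<^sup>2)"
    by (rule Bochner_Integration.integrable_bound[OF dom])
       (use assms(1) bound in \<open>auto elim!: eventually_mono\<close>)
  then have "integral\<^sup>L lborel (\<lambda>t. (norm (g t))\<^sup>2) \<le> c\<^sup>2 * integral\<^sup>L lborel h"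
    using integral_mono_AE[OF _ dom bound] by simp
  then have "L2_norm_R g \<le> sqrt (c\<^sup>2 * integral\<^sup>L lborel h)"
    unfolding L2_norm_R_def by (rule real_sqrt_le_mono)
  then show ?thesis using assms(3) by (simp add: real_sqrt_mult)
qed

theorem lemma1:
  fixes N :: nat and \<xi>0 s :: real
    and A :: "nat \<Rightarrow> real \<Rightarrow> real" and C :: "nat \<Rightarrow> real"
    and \<tau> :: "real \<Rightarrow> real"
  assumes xi0: "\<xi>0 > 0"
    and A_Cc: "\<And>n. n \<in> {1..N} \<Longrightarrow> Cc_inf (A n)"
    and A_nonneg: "\<And>n t. n \<in> {1..N} \<Longrightarrow> A n t \<ge> 0"
    and A_bound: "\<And>n t. n \<in> {1..N} \<Longrightarrow> \<bar>A n t\<bar> \<le> 1 / real n"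
    and C_pos: "\<And>n. n \<in> {1..N} \<Longrightarrow> C n > 0"
    and s_gt: "s > 1"
    and A_deriv: "\<And>n t. n \<in> {1..N} \<Longrightarrow> \<bar>deriv (A n) t\<bar> \<le> C n / (1 + \<bar>t\<bar> powr s)"
    and \<tau>_meas: "\<tau> \<in> borel_measurable lborel"
    and \<tau>_ess_bdd: "\<exists>c. AE x in lborel. \<bar>\<tau> x\<bar> \<le> c"
    and \<tau>_small: "Linf_norm \<tau> < 1"
  shows
    "let f = (\<lambda>t. \<Sum>n=1..N. complex_of_real (A n t) * exp (2 * complex_of_real pi * \<i> * of_nat n * complex_of_real \<xi>0 * complex_of_real t));
         Ff = (\<lambda>t. \<Sum>n=1..N. complex_of_real (A n (t + \<tau> t)) * exp (2 * complex_of_real pi * \<i> * of_nat n * complex_of_real \<xi>0 * complex_of_real t));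
         D = sqrt (2 + (1 / (1 - Linf_norm \<tau>)) * (L2_norm_R (\<lambda>x::real. 1 / (1 + \<bar>x\<bar> powr s)))\<^sup>2)
     in L2_norm_R (\<lambda>t. f t - Ff t) \<le> D * Linf_norm \<tau> * (\<Sum>n=1..N. C n)"
proof -
  define \<delta> where "\<delta> = Linf_norm \<tau>"
  define c where "c = (\<lambda>n. 2 * complex_of_real pi * \<i> * of_nat n * complex_of_real \<xi>0)"
  define f where "f = (\<lambda>t. \<Sum>n=1..N. complex_of_real (A n t) * exp (c n * complex_of_real t))"
  define Ff where "Ff = (\<lambda>t. \<Sum>n=1..N. complex_of_real (A n (t + \<tau> t)) * exp (c n * complex_of_real t))"
  have \<delta>_nonneg: "0 \<le> \<delta>" and \<tau>_AE: "AE t in lborel. \<bar>\<tau> t\<bar> \<le> \<delta>"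
    unfolding \<delta>_def using Linf_norm_nonneg AE_abs_le_Linf_norm \<tau>_ess_bdd by blast+
  have \<delta>_lt: "\<delta> < 1" using \<tau>_small unfolding \<delta>_def .
  have A_has_deriv: "(A n has_real_derivative deriv (A n) u) (at u)" if "n \<in> {1..N}" for n u
    using A_Cc[OF that] unfolding Cc_inf_def by (blast intro: smooth_real_has_real_derivative)
  have measurable: "(\<lambda>t. f t - Ff t) \<in> borel_measurable lborel"
  proof -
    have "continuous_on UNIV (A n)" if "n \<in> {1..N}" for n
      using A_has_deriv[OF that] by (meson DERIV_isCont continuous_at_imp_continuous_on)
    then show ?thesis unfolding f_def Ff_def using \<tau>_meas
      by (intro borel_measurable_diff borel_measurable_modulated_sum[where \<sigma>="\<lambda>t. t"]
            borel_measurable_modulated_sum[where \<sigma>="\<lambda>t. t + \<tau> t"]) auto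
  qed
  have pointwise: "AE t in lborel. norm (f t - Ff t) \<le> \<delta> * (\<Sum>n=1..N. C n) * decay_envelope s \<delta> t"
    using \<tau>_AE unfolding f_def Ff_def c_def
    by (rule eventually_mono,
        intro norm_modulated_shift_difference_le[where A'="\<lambda>n. deriv (A n)"] A_has_deriv A_deriv)
       (use \<delta>_lt s_gt norm_exp_2pi_i_frequency in auto)
  have "0 \<le> \<delta> * (\<Sum>n=1..N. C n)"
    using \<delta>_nonneg C_pos by (intro mult_nonneg_nonneg sum_nonneg) (auto intro: less_imp_le)
  then have "L2_norm_R (\<lambda>t. f t - Ff t)
              \<le> \<delta> * (\<Sum>n=1..N. C n) * sqrt (integral\<^sup>L lborel (envelope_majorant s \<delta>))"
    using L2_norm_R_le_of_AE_bound[OF measurable integrable_envelope_majorant[OF s_gt \<delta>_lt] _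
        decay_envelope_nonneg decay_envelope_squared_le pointwise] by blast
  then show ?thesis
    unfolding Let_def f_def Ff_def c_def \<delta>_def integral_envelope_majorant[OF s_gt \<tau>_small]
    by (simp add: mult_ac)
qed

end
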